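(* Let $d\ge1$, $n\ge2$, $N\ge1$, $L>0$, $h=L/N$, $\Delta t>0$, and let $b_{ij}>0$ with $b_{ij}=b_{ji}$ for $i\neq j$. Let $\rho^k$ be an $n$-tuple of cell-centered grid functions on the $d$-dimensional periodic grid with $\rho^k_{i,\ell}>0$ and $\sum_{i=1}^n\rho^k_{i,\ell}=1$ for all $i,\ell$. Then there exists $\delta_0>0$ such that for every $0<\delta\le\delta_0$: a cell-centered $n$-tuple $\rho^{k+1}$ with $\rho^{k+1}_{i,\ell}>0$ for all $i,\ell$ is a solution of the scheme (i.e. there is an edge-centered $n$-tuple $v^{k+1}$ with, for $i=1,\dots,n$, $$\frac{\rho^{k+1}_i-\rho^k_i}{\Delta t}+d_h(\hat\rho^k_iv^{k+1}_i)=0\ \text{at cell points},\quad -\sum_{j=1}^nb_{ij}\hat\rho^k_j(v^{k+1}_i-v^{k+1}_j)=D_h\log\rho^{k+1}_i-\frac{\sum_{j=1}^n\hat\rho^k_jD_h\log\rho^{k+1}_j}{\sum_{j=1}^n\hat\rho^k_j},\quad\sum_{j=1}^n\hat\rho^k_jv^{k+1}_j=0\ \text{at edge points})$$ if and only if $\rho^{k+1}$ is the $\rho$-component of a minimizer over $K_\delta$ of $$J(\rho,w)=\frac{1}{4\Delta t}\,h^d\sum_{\text{edge points }e}\sum_{i,j=1}^nb_{ij}\hat\rho^k_{i,e}\hat\rho^k_{j,e}(w_{i,e}-w_{j,e})^2+h^d\sum_{\ell\in\{1,\dots,N\}^d}\sum_{i=1}^n\rho_{i,\ell}\log\rho_{i,\ell},$$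 where $K_\delta$ is the set of pairs $(\rho,w)$, $\rho$ a cell-centered and $w$ an edge-centered $n$-tuple, with $\rho_{i,\ell}\ge\delta$, $\rho_{i,\ell}-\rho^k_{i,\ell}+(d_h(\hat\rho^k_iw_i))_\ell=0$, $\sum_{i=1}^n\rho_{i,\ell}=1$ for all $i$ and $\ell\in\{1,\dots,N\}^d$, and $\sum_{i=1}^n\hat\rho^k_{i,e}w_{i,e}=0$ at every edge point $e$.
   Context: Multidimensional periodic grid: cell points $\ell=(\ell_1,\dots,\ell_d)\in\mathbb Z^d$ modulo $N$ in each coordinate; edge points $\ell+\frac12e_s$, $s=1,\dots,d$, $N$-periodic. $(D_hf)_{\ell+\frac12e_s}=(f_{\ell+e_s}-f_\ell)/h$; $(d_h\phi)_\ell=\sum_{s=1}^d(\phi_{\ell+\frac12e_s}-\phi_{\ell-\frac12e_s})/h$; $\hat f_{\ell+\frac12e_s}=(f_\ell+f_{\ell+e_s})/2$. Products and logarithms are pointwise; terms with $i=j$ vanish so $b_{ii}$ is irrelevant. *)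

theory Defs
  imports Main Complex_Main
begin

text \<open>A cell point is
  represented by its coordinate vector l :: nat => nat with l s < N for s < d and
  l s = 0 for s >= d (coordinates taken modulo N, indexed 0..N-1).
  An edge point l + 1/2 e_s is represented by the pair (l, s) with s < d.\<close>

type_synonym cell = "nat \<Rightarrow> nat"
type_synonym edge = "cell \<times> nat"

definition cells :: "nat \<Rightarrow> nat \<Rightarrow> cell set" where
  "cells d N = {l. (\<forall>s<d. l s < N) \<and> (\<forall>s\<ge>d. l s = 0)}"

definition edges :: "nat \<Rightarrow> nat \<Rightarrow> edge set" where
  "edges d N = cells d N \<times> {..<d}"

definition shiftp :: "nat \<Rightarrow> cell \<Rightarrow> nat \<Rightarrow> cell" where
  "shiftp N l s = l(s := (l s + 1) mod N)"

definition shiftm :: "nat \<Rightarrow> cell \<Rightarrow> nat \<Rightarrow> cell" where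
  "shiftm N l s = l(s := (l s + N - 1) mod N)"

definition Dh :: "nat \<Rightarrow> real \<Rightarrow> (cell \<Rightarrow> real) \<Rightarrow> edge \<Rightarrow> real" where
  "Dh N h f e = (f (shiftp N (fst e) (snd e)) - f (fst e)) / h"

definition dh :: "nat \<Rightarrow> nat \<Rightarrow> real \<Rightarrow> (edge \<Rightarrow> real) \<Rightarrow> cell \<Rightarrow> real" where
  "dh d N h \<phi> l = (\<Sum>s<d. (\<phi> (l, s) - \<phi> (shiftm N l s, s)) / h)"

definition hat :: "nat \<Rightarrow> (cell \<Rightarrow> real) \<Rightarrow> edge \<Rightarrow> real" where
  "hat N f e = (f (fst e) + f (shiftp N (fst e) (snd e))) / 2"

text \<open>Species are indexed by i in {1..n}. rho0 = rho^k, rho1 = rho^{k+1}.\<close>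

definition is_scheme_solution ::
  "nat \<Rightarrow> nat \<Rightarrow> nat \<Rightarrow> real \<Rightarrow> real \<Rightarrow> (nat \<Rightarrow> nat \<Rightarrow> real)
   \<Rightarrow> (nat \<Rightarrow> cell \<Rightarrow> real) \<Rightarrow> (nat \<Rightarrow> cell \<Rightarrow> real) \<Rightarrow> bool" where
  "is_scheme_solution d N n h dt b rho0 rho1 \<longleftrightarrow>
     (\<exists>v :: nat \<Rightarrow> edge \<Rightarrow> real.
        (\<forall>i\<in>{1..n}. \<forall>l\<in>cells d N.
            (rho1 i l - rho0 i l) / dt + dh d N h (\<lambda>e. hat N (rho0 i) e * v i e) l = 0) \<and>
        (\<forall>i\<in>{1..n}. \<forall>e\<in>edges d N.
            - (\<Sum>j=1..n. b i j * hat N (rho0 j) e * (v i e - v j e))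
            = Dh N h (\<lambda>l. ln (rho1 i l)) e
              - (\<Sum>j=1..n. hat N (rho0 j) e * Dh N h (\<lambda>l. ln (rho1 j l)) e)
                / (\<Sum>j=1..n. hat N (rho0 j) e)) \<and>
        (\<forall>e\<in>edges d N. (\<Sum>j=1..n. hat N (rho0 j) e * v j e) = 0))"

definition Jfun ::
  "nat \<Rightarrow> nat \<Rightarrow> nat \<Rightarrow> real \<Rightarrow> real \<Rightarrow> (nat \<Rightarrow> nat \<Rightarrow> real)
   \<Rightarrow> (nat \<Rightarrow> cell \<Rightarrow> real) \<Rightarrow> (nat \<Rightarrow> cell \<Rightarrow> real) \<Rightarrow> (nat \<Rightarrow> edge \<Rightarrow> real) \<Rightarrow> real" where
  "Jfun d N n h dt b rho0 rho w =
     1 / (4 * dt) * h ^ d * (\<Sum>e\<in>edges d N. \<Sum>i=1..n. \<Sum>j=1..n.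
         b i j * hat N (rho0 i) e * hat N (rho0 j) e * (w i e - w j e)\<^sup>2)
     + h ^ d * (\<Sum>l\<in>cells d N. \<Sum>i=1..n. rho i l * ln (rho i l))"

definition Kset ::
  "nat \<Rightarrow> nat \<Rightarrow> nat \<Rightarrow> real \<Rightarrow> real \<Rightarrow> (nat \<Rightarrow> cell \<Rightarrow> real)
   \<Rightarrow> ((nat \<Rightarrow> cell \<Rightarrow> real) \<times> (nat \<Rightarrow> edge \<Rightarrow> real)) set" where
  "Kset d N n h \<delta> rho0 =
     {(rho, w). (\<forall>i\<in>{1..n}. \<forall>l\<in>cells d N.
                   rho i l \<ge> \<delta> \<and>
                   rho i l - rho0 i l + dh d N h (\<lambda>e. hat N (rho0 i) e * w i e) l = 0) \<and>
                (\<forall>l\<in>cells d N. (\<Sum>i=1..n. rho i l) = 1) \<and>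
                (\<forall>e\<in>edges d N. (\<Sum>i=1..n. hat N (rho0 i) e * w i e) = 0)}"

definition is_min_rho_component ::
  "nat \<Rightarrow> nat \<Rightarrow> nat \<Rightarrow> real \<Rightarrow> real \<Rightarrow> (nat \<Rightarrow> nat \<Rightarrow> real) \<Rightarrow> real
   \<Rightarrow> (nat \<Rightarrow> cell \<Rightarrow> real) \<Rightarrow> (nat \<Rightarrow> cell \<Rightarrow> real) \<Rightarrow> bool" where
  "is_min_rho_component d N n h dt b \<delta> rho0 rho1 \<longleftrightarrow>
     (\<exists>w. (rho1, w) \<in> Kset d N n h \<delta> rho0 \<and>
          (\<forall>(rho, w') \<in> Kset d N n h \<delta> rho0.
              Jfun d N n h dt b rho0 rho1 w \<le> Jfun d N n h dt b rho0 rho w'))"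

end

(*
  The scheme is the Euler-Lagrange system of J on K_delta. Write rhat_i for the edge average of
  rho^k_i and friction_i = sum_j b_ij rhat_j (w_i - w_j). Along a direction (sigma, psi) that
  preserves the affine constraints of K_delta, the derivative of J is h^d times
  sum_e sum_i rhat_i psi_i (friction_i / dt + D_h log rho_i), and the only constraint on psi at an
  edge is sum_i rhat_i psi_i = 0. So J is stationary exactly when friction_i / dt + D_h log rho_i
  is the same for all species at every edge. Since sum_i rhat_i friction_i = 0 by the symmetry of
  b, this common value is the rhat-weighted mean of D_h log rho_i, which turns the condition into
  the second scheme equation for the velocity v = w / dt. As J is convex, such a stationary point
  with positive densities minimizes J over all of K_0, and conversely a minimizer over K_delta
  lying strictly above delta is stationary.

  It remains to see that minimizers lie strictly above delta once delta <= delta_0. Moving a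
  point of K_0 a step t towards (rho^k, 0) does not increase the dissipation, and since x ln x
  has slope ln x + 1 -> -infinity at 0, an entry below t gains more entropy than all other
  entries together can lose, for t small in terms of min rho^k, n and N^d only.
*)

theory Submission
  imports Defs
begin

section \<open>Discrete calculus on the periodic grid\<close>

lemma finite_cells: "finite (cells d N)"
proof -
  have "cells d N = {l. \<forall>s. (s \<in> {..<d} \<longrightarrow> l s \<in> {..<N}) \<and> (s \<notin> {..<d} \<longrightarrow> l s = 0)}"
    unfolding cells_def by auto
  then show ?thesis
    using finite_set_of_finite_funs[of "{..<d}" "{..<N}" 0] by simp
qed

lemma finite_edges: "finite (edges d N)"
  by (simp add: edges_def finite_cells)

lemma sum_edges: "(\<Sum>e\<in>edges d N. f e) = (\<Sum>l\<in>cells d N. \<Sum>s<d. f (l, s))"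
  unfolding edges_def by (simp add: sum.cartesian_product)

lemma zero_in_cells: "N \<ge> 1 \<Longrightarrow> (\<lambda>_. 0) \<in> cells d N"
  unfolding cells_def by auto

lemma shiftp_in_cells: "l \<in> cells d N \<Longrightarrow> s < d \<Longrightarrow> shiftp N l s \<in> cells d N"
  unfolding cells_def shiftp_def by auto

lemma shiftm_in_cells: "l \<in> cells d N \<Longrightarrow> s < d \<Longrightarrow> shiftm N l s \<in> cells d N"
  unfolding cells_def shiftm_def by auto

lemma mod_pred_succ: "a < (N::nat) \<Longrightarrow> ((a + N - 1) mod N + 1) mod N = a"
proof -
  assume "a < N"
  have "((a + N - 1) mod N + 1) mod N = (a + N - 1 + 1) mod N" by (rule mod_add_left_eq)
  also have "a + N - 1 + 1 = a + N" using \<open>a < N\<close> by simp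
  finally show ?thesis using \<open>a < N\<close> by simp
qed

lemma mod_succ_pred: "a < (N::nat) \<Longrightarrow> ((a + 1) mod N + N - 1) mod N = a"
proof -
  assume "a < N"
  have "((a + 1) mod N + N - 1) mod N = ((a + 1) mod N + (N - 1)) mod N" using \<open>a < N\<close> by simp
  also have "\<dots> = (a + 1 + (N - 1)) mod N" by (rule mod_add_left_eq)
  also have "a + 1 + (N - 1) = a + N" using \<open>a < N\<close> by simp
  finally show ?thesis using \<open>a < N\<close> by simp
qed

lemma shiftp_shiftm:
  assumes "l \<in> cells d N" "s < d"
  shows "shiftp N (shiftm N l s) s = l"
proof -
  have "l s < N" using assms by (simp add: cells_def)
  then show ?thesis
    unfolding shiftp_def shiftm_def by (simp only: fun_upd_same fun_upd_upd mod_pred_succ fun_upd_triv)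
qed

lemma shiftm_shiftp:
  assumes "l \<in> cells d N" "s < d"
  shows "shiftm N (shiftp N l s) s = l"
proof -
  have "l s < N" using assms by (simp add: cells_def)
  then show ?thesis
    unfolding shiftp_def shiftm_def by (simp only: fun_upd_same fun_upd_upd mod_succ_pred fun_upd_triv)
qed

lemma sum_cells_shiftm:
  assumes "s < d"
  shows "(\<Sum>l\<in>cells d N. g (shiftm N l s)) = (\<Sum>l\<in>cells d N. g l)"
  by (rule sum.reindex_bij_witness[where i="\<lambda>m. shiftp N m s" and j="\<lambda>l. shiftm N l s"])
     (use assms in \<open>auto simp: shiftp_shiftm shiftm_shiftp shiftp_in_cells shiftm_in_cells\<close>)

lemma sum_cells_mult_dh:
  "(\<Sum>l\<in>cells d N. f l * dh d N h \<phi> l) = - (\<Sum>e\<in>edges d N. \<phi> e * Dh N h f e)"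
proof -
  have shift: "(\<Sum>l\<in>cells d N. f l * \<phi> (shiftm N l s, s)) = (\<Sum>l\<in>cells d N. f (shiftp N l s) * \<phi> (l, s))"
    if "s < d" for s
  proof -
    have "(\<Sum>l\<in>cells d N. f l * \<phi> (shiftm N l s, s))
        = (\<Sum>l\<in>cells d N. f (shiftp N (shiftm N l s) s) * \<phi> (shiftm N l s, s))"
      using that by (intro sum.cong) (simp_all add: shiftp_shiftm)
    also have "\<dots> = (\<Sum>l\<in>cells d N. f (shiftp N l s) * \<phi> (l, s))"
      using that by (rule sum_cells_shiftm)
    finally show ?thesis .
  qed
  have "(\<Sum>l\<in>cells d N. f l * dh d N h \<phi> l)
      = (\<Sum>s<d. ((\<Sum>l\<in>cells d N. f l * \<phi> (l, s)) - (\<Sum>l\<in>cells d N. f l * \<phi> (shiftm N l s, s))) / h)"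
    unfolding dh_def sum_distrib_left
    by (subst sum.swap) (simp add: sum_subtractf[symmetric] sum_divide_distrib[symmetric] right_diff_distrib)
  also have "\<dots> = (\<Sum>s<d. ((\<Sum>l\<in>cells d N. f l * \<phi> (l, s)) - (\<Sum>l\<in>cells d N. f (shiftp N l s) * \<phi> (l, s))) / h)"
    by (simp add: shift)
  also have "\<dots> = (\<Sum>s<d. \<Sum>l\<in>cells d N. - (\<phi> (l, s) * Dh N h f (l, s)))"
  proof (intro sum.cong refl)
    fix s
    have "((\<Sum>l\<in>cells d N. f l * \<phi> (l, s)) - (\<Sum>l\<in>cells d N. f (shiftp N l s) * \<phi> (l, s))) / h
        = (\<Sum>l\<in>cells d N. (f l * \<phi> (l, s) - f (shiftp N l s) * \<phi> (l, s)) / h)"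
      by (simp add: sum_subtractf[symmetric] sum_divide_distrib diff_divide_distrib)
    also have "\<dots> = (\<Sum>l\<in>cells d N. - (\<phi> (l, s) * Dh N h f (l, s)))"
      unfolding Dh_def by (intro sum.cong refl) (simp add: algebra_simps diff_divide_distrib)
    finally show "((\<Sum>l\<in>cells d N. f l * \<phi> (l, s)) - (\<Sum>l\<in>cells d N. f (shiftp N l s) * \<phi> (l, s))) / h
        = (\<Sum>l\<in>cells d N. - (\<phi> (l, s) * Dh N h f (l, s)))" .
  qed
  finally show ?thesis
    by (simp add: sum_edges sum_negf sum.swap[of _ "{..<d}"])
qed

lemma dh_add: "dh d N h (\<lambda>e. F e + G e) l = dh d N h F l + dh d N h G l"
  unfolding dh_def by (simp add: sum.distrib[symmetric] add_divide_distrib[symmetric] algebra_simps)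

lemma dh_cmult: "dh d N h (\<lambda>e. c * F e) l = c * dh d N h F l"
  unfolding dh_def by (simp add: sum_distrib_left right_diff_distrib)

lemma dh_diff: "dh d N h (\<lambda>e. F e - G e) l = dh d N h F l - dh d N h G l"
  unfolding dh_def by (simp add: sum_subtractf[symmetric] diff_divide_distrib[symmetric] algebra_simps)

lemma dh_sum: "dh d N h (\<lambda>e. \<Sum>j\<in>A. F j e) l = (\<Sum>j\<in>A. dh d N h (F j) l)"
  unfolding dh_def
  by (subst sum.swap) (simp add: sum_subtractf[symmetric] sum_divide_distrib[symmetric])

lemma dh_zero: "dh d N h (\<lambda>e. 0) l = 0"
  by (simp add: dh_def)

lemma dh_cong:
  "(\<And>e. e \<in> edges d N \<Longrightarrow> F e = G e) \<Longrightarrow> l \<in> cells d N \<Longrightarrow> dh d N h F l = dh d N h G l"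
  unfolding dh_def by (rule sum.cong) (auto simp: edges_def shiftm_in_cells)

lemma sum_antisym_eq_zero:
  fixes X :: "'a \<Rightarrow> 'a \<Rightarrow> 'b::linordered_ab_group_add"
  assumes "\<And>a b. a \<in> A \<Longrightarrow> b \<in> A \<Longrightarrow> X a b = - X b a"
  shows "(\<Sum>a\<in>A. \<Sum>b\<in>A. X a b) = 0"
proof -
  have "(\<Sum>a\<in>A. \<Sum>b\<in>A. X a b) = (\<Sum>b\<in>A. \<Sum>a\<in>A. - X b a)"
    by (subst sum.swap) (intro sum.cong refl; metis assms)
  then show ?thesis by (simp add: sum_negf)
qed

lemma sum_antisym_mult_diff:
  fixes X :: "'a \<Rightarrow> 'a \<Rightarrow> 'b::linordered_idom"
  assumes "\<And>a b. a \<in> A \<Longrightarrow> b \<in> A \<Longrightarrow> X a b = - X b a"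
  shows "(\<Sum>a\<in>A. \<Sum>b\<in>A. X a b * (p a - p b)) = 2 * (\<Sum>a\<in>A. p a * (\<Sum>b\<in>A. X a b))"
proof -
  have sym: "(\<Sum>a\<in>A. \<Sum>b\<in>A. X a b * (p a + p b)) = 0"
    by (rule sum_antisym_eq_zero) (metis assms add.commute mult_minus_left)
  have "(\<Sum>a\<in>A. \<Sum>b\<in>A. X a b * (p a - p b))
      = (\<Sum>a\<in>A. \<Sum>b\<in>A. 2 * (p a * X a b) - X a b * (p a + p b))"
    by (intro sum.cong refl) (simp add: algebra_simps)
  also have "\<dots> = (\<Sum>a\<in>A. \<Sum>b\<in>A. 2 * (p a * X a b)) - (\<Sum>a\<in>A. \<Sum>b\<in>A. X a b * (p a + p b))"
    by (simp only: sum_subtractf)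
  also have "\<dots> = 2 * (\<Sum>a\<in>A. p a * (\<Sum>b\<in>A. X a b))"
    by (simp only: sym diff_zero sum_distrib_left)
  finally show ?thesis .
qed

lemma xlnx_ge_tangent:
  fixes x y :: real
  assumes "0 < x" "0 \<le> y"
  shows "x * ln x + (ln x + 1) * (y - x) \<le> y * ln y"
proof (cases "y = 0")
  case False
  then have "y > 0" using assms by simp
  have "ln (x / y) \<le> x / y - 1" using assms \<open>y > 0\<close> by (intro ln_le_minus_one) simp
  then have "y * (ln x - ln y) \<le> y * (x / y - 1)"
    using assms \<open>y > 0\<close> by (intro mult_left_mono) (simp_all add: ln_div)
  then show ?thesis using \<open>y > 0\<close> by (simp add: algebra_simps)
qed (use assms in \<open>simp add: algebra_simps\<close>)

lemma common_value_iff_weighted_mean: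
  fixes r F G :: "'a \<Rightarrow> real"
  assumes "finite A" "(\<Sum>j\<in>A. r j) \<noteq> 0" "(\<Sum>j\<in>A. r j * F j) = 0"
  shows "(\<forall>i\<in>A. - F i = G i - (\<Sum>j\<in>A. r j * G j) / (\<Sum>j\<in>A. r j))
     \<longleftrightarrow> (\<forall>i\<in>A. \<forall>k\<in>A. F i + G i = F k + G k)"
proof
  assume "\<forall>i\<in>A. \<forall>k\<in>A. F i + G i = F k + G k"
  moreover obtain i0 where "i0 \<in> A" using assms(2) by (metis sum.empty ex_in_conv)
  ultimately have F: "F j = (F i0 + G i0) - G j" if "j \<in> A" for j
    using that by (metis add_diff_cancel_right')
  have "(\<Sum>j\<in>A. r j * F j) = (\<Sum>j\<in>A. (F i0 + G i0) * r j - r j * G j)"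
    by (intro sum.cong refl) (simp add: F right_diff_distrib mult.commute)
  also have "\<dots> = (F i0 + G i0) * (\<Sum>j\<in>A. r j) - (\<Sum>j\<in>A. r j * G j)"
    by (simp add: sum_subtractf sum_distrib_left)
  finally have "F i0 + G i0 = (\<Sum>j\<in>A. r j * G j) / (\<Sum>j\<in>A. r j)"
    using assms(2,3) by (simp add: field_simps)
  then show "\<forall>i\<in>A. - F i = G i - (\<Sum>j\<in>A. r j * G j) / (\<Sum>j\<in>A. r j)"
    using F by simp
next
  assume mean: "\<forall>i\<in>A. - F i = G i - (\<Sum>j\<in>A. r j * G j) / (\<Sum>j\<in>A. r j)"
  show "\<forall>i\<in>A. \<forall>k\<in>A. F i + G i = F k + G k"
  proof (intro ballI)
    fix i k assume "i \<in> A" "k \<in> A"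
    with mean have "- F i = G i - (\<Sum>j\<in>A. r j * G j) / (\<Sum>j\<in>A. r j)"
      and "- F k = G k - (\<Sum>j\<in>A. r j * G j) / (\<Sum>j\<in>A. r j)" by auto
    then show "F i + G i = F k + G k" by linarith
  qed
qed

lemma tendsto_affine_nhds: "((\<lambda>t::real. a + t * c) \<longlongrightarrow> a) (nhds 0)"
  by (auto intro!: tendsto_eq_intros filterlim_ident)

lemma xlnx_interpolation_le:
  fixes x r t :: real
  assumes "0 < x + t * (r - x)" "0 \<le> x"
  shows "(x + t * (r - x)) * ln (x + t * (r - x)) \<le> x * ln x + t * ((ln (x + t * (r - x)) + 1) * (r - x))"
  using xlnx_ge_tangent[OF assms] by (simp add: algebra_simps)

lemma xlnx_slope_le:
  fixes x r t m :: real
  assumes "0 < x" "x \<le> 1" "0 < m" "m \<le> r" "r \<le> 1" "0 \<le> t" "t \<le> 1"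
  shows "(ln (x + t * (r - x)) + 1) * (r - x) \<le> 1 - ln m"
proof -
  define xt where "xt = x + t * (r - x)"
  have "ln m \<le> 0" using assms by simp
  show ?thesis
  proof (cases "x \<le> r")
    case True
    have "t * (r - x) \<le> r - x" using True assms by (simp add: mult_left_le_one_le)
    then have "x \<le> xt" "xt \<le> 1" unfolding xt_def using True assms by auto
    then have "ln xt \<le> 0" using assms by simp
    then have "(ln xt + 1) * (r - x) \<le> 1"
      using True assms by (cases "ln xt + 1 \<le> 0") (auto intro: mult_nonpos_nonneg mult_le_one)
    then show ?thesis using \<open>ln m \<le> 0\<close> unfolding xt_def by simp
  next
    case False
    have "xt = r + (1 - t) * (x - r)" unfolding xt_def by (simp add: algebra_simps)
    moreover have "0 \<le> (1 - t) * (x - r)" using False assms by simp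
    ultimately have "m \<le> xt" using assms by simp
    then have "ln m \<le> ln xt" using assms by simp
    then have "(ln xt + 1) * (r - x) \<le> (ln m + 1) * (r - x)"
      using False by (intro mult_right_mono_neg) auto
    also have "\<dots> \<le> 1 - ln m"
    proof (cases "ln m + 1 \<ge> 0")
      case True
      moreover have "r - x \<le> 0" using False by simp
      ultimately have "(ln m + 1) * (r - x) \<le> 0" by (rule mult_nonneg_nonpos)
      then show ?thesis using \<open>ln m \<le> 0\<close> by simp
    next
      case neg: False
      have "(ln m + 1) * (r - x) = (- ln m - 1) * (x - r)" by (simp add: algebra_simps)
      also have "\<dots> \<le> - ln m - 1" using neg assms False by (simp add: mult_left_le)
      finally show ?thesis by simp
    qed
    finally show ?thesis unfolding xt_def .
  qed
qed

lemma xlnx_slope_le_small: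
  fixes x r t m :: real
  assumes "0 < x" "x \<le> t" "m \<le> r" "r \<le> 1" "0 < t" "t \<le> m / 2" "ln (2 * t) + 1 \<le> 0"
  shows "(ln (x + t * (r - x)) + 1) * (r - x) \<le> (ln (2 * t) + 1) * (m / 2)"
proof -
  define xt where "xt = x + t * (r - x)"
  have "xt = (1 - t) * x + t * r" unfolding xt_def by (simp add: algebra_simps)
  moreover have "(1 - t) * x \<le> x" "t * r \<le> t" "0 < t * r" "0 \<le> (1 - t) * x"
    using assms by (auto simp: mult_left_le_one_le mult_left_le)
  ultimately have "0 < xt" "xt \<le> 2 * t" using assms by linarith+
  then have "ln xt \<le> ln (2 * t)" by simp
  have "m / 2 \<le> r - x" using assms by simp
  have "(ln xt + 1) * (r - x) \<le> (ln (2 * t) + 1) * (r - x)"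
    using \<open>ln xt \<le> ln (2 * t)\<close> \<open>m / 2 \<le> r - x\<close> assms by (intro mult_right_mono) auto
  also have "\<dots> \<le> (ln (2 * t) + 1) * (m / 2)"
    using \<open>m / 2 \<le> r - x\<close> assms by (intro mult_left_mono_neg) auto
  finally show ?thesis unfolding xt_def .
qed

lemma xlnx_step_le:
  fixes x r t m :: real
  assumes "0 < x" "x \<le> 1" "0 < m" "m \<le> r" "r \<le> 1" "0 \<le> t" "t \<le> 1"
  shows "(x + t * (r - x)) * ln (x + t * (r - x)) \<le> x * ln x + t * (1 - ln m)"
proof -
  have "x + t * (r - x) = (1 - t) * x + t * r" by (simp add: algebra_simps)
  moreover have "0 \<le> (1 - t) * x" "0 \<le> t * r" "0 < (1 - t) * x \<or> 0 < t * r"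
    using assms by (auto simp: less_le)
  ultimately have "0 < x + t * (r - x)" by auto
  moreover have "t * ((ln (x + t * (r - x)) + 1) * (r - x)) \<le> t * (1 - ln m)"
    using assms xlnx_slope_le by (intro mult_left_mono) auto
  ultimately show ?thesis using xlnx_interpolation_le[of x t r] assms(1) by linarith
qed

lemma xlnx_step_le_small:
  fixes x r t m :: real
  assumes "0 < x" "x \<le> t" "m \<le> r" "r \<le> 1" "0 < t" "t \<le> m / 2" "ln (2 * t) + 1 \<le> 0"
  shows "(x + t * (r - x)) * ln (x + t * (r - x)) \<le> x * ln x + t * ((ln (2 * t) + 1) * (m / 2))"
proof -
  have "0 < x + t * (r - x)" using assms by (simp add: add_pos_nonneg)
  moreover have "t * ((ln (x + t * (r - x)) + 1) * (r - x)) \<le> t * ((ln (2 * t) + 1) * (m / 2))"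
    using assms xlnx_slope_le_small by (intro mult_left_mono) auto
  ultimately show ?thesis using xlnx_interpolation_le[of x t r] assms(1) by linarith
qed

section \<open>The functional and its constraint set\<close>

locale scheme_step =
  fixes d N n :: nat and h dt :: real and b :: "nat \<Rightarrow> nat \<Rightarrow> real"
    and rho0 :: "nat \<Rightarrow> cell \<Rightarrow> real"
  assumes N_pos: "N \<ge> 1" and n_pos: "n \<ge> 1" and h_pos: "h > 0" and dt_pos: "dt > 0"
    and b_pos_sym: "\<And>i j. i \<in> {1..n} \<Longrightarrow> j \<in> {1..n} \<Longrightarrow> i \<noteq> j \<Longrightarrow> b i j > 0 \<and> b i j = b j i"
    and rho0_pos: "\<And>i l. i \<in> {1..n} \<Longrightarrow> l \<in> cells d N \<Longrightarrow> rho0 i l > 0"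
    and rho0_sum: "\<And>l. l \<in> cells d N \<Longrightarrow> (\<Sum>i=1..n. rho0 i l) = 1"
begin

abbreviation rhat :: "nat \<Rightarrow> edge \<Rightarrow> real" where
  "rhat i e \<equiv> hat N (rho0 i) e"

lemma rhat_pos: "i \<in> {1..n} \<Longrightarrow> e \<in> edges d N \<Longrightarrow> rhat i e > 0"
  unfolding hat_def edges_def using rho0_pos shiftp_in_cells by (auto intro!: add_pos_pos)

lemma sum_rhat_pos: "e \<in> edges d N \<Longrightarrow> (\<Sum>j=1..n. rhat j e) > 0"
  using n_pos rhat_pos by (intro sum_pos) auto

lemma rho0_le_one: "i \<in> {1..n} \<Longrightarrow> l \<in> cells d N \<Longrightarrow> rho0 i l \<le> 1"
  using member_le_sum[of i "{1..n}" "\<lambda>i. rho0 i l"] rho0_sum[of l] rho0_pos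
  by (auto intro: less_imp_le)

definition friction :: "(nat \<Rightarrow> edge \<Rightarrow> real) \<Rightarrow> nat \<Rightarrow> edge \<Rightarrow> real" where
  "friction w i e = (\<Sum>j=1..n. b i j * rhat j e * (w i e - w j e))"

definition dlog :: "(nat \<Rightarrow> cell \<Rightarrow> real) \<Rightarrow> nat \<Rightarrow> edge \<Rightarrow> real" where
  "dlog \<rho> i e = Dh N h (\<lambda>l. ln (\<rho> i l)) e"

definition dissipation :: "(nat \<Rightarrow> edge \<Rightarrow> real) \<Rightarrow> real" where
  "dissipation w = (\<Sum>e\<in>edges d N. \<Sum>i=1..n. \<Sum>j=1..n. b i j * rhat i e * rhat j e * (w i e - w j e)\<^sup>2)"

definition entropy :: "(nat \<Rightarrow> cell \<Rightarrow> real) \<Rightarrow> real" where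
  "entropy \<rho> = (\<Sum>l\<in>cells d N. \<Sum>i=1..n. \<rho> i l * ln (\<rho> i l))"

lemma Jfun_eq: "Jfun d N n h dt b rho0 \<rho> w = 1 / (4 * dt) * h ^ d * dissipation w + h ^ d * entropy \<rho>"
  unfolding Jfun_def dissipation_def entropy_def by simp

lemma friction_cmult: "friction (\<lambda>i e. c * w i e) i e = c * friction w i e"
  unfolding friction_def by (simp add: sum_distrib_left algebra_simps)

lemma friction_polar:
  "(\<Sum>i=1..n. \<Sum>j=1..n. b i j * rhat i e * rhat j e * (w i e - w j e) * (p i - p j))
    = 2 * (\<Sum>i=1..n. p i * (rhat i e * friction w i e))"
proof -
  have antisym: "b i j * rhat i e * rhat j e * (w i e - w j e) = - (b j i * rhat j e * rhat i e * (w j e - w i e))"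
    if "i \<in> {1..n}" "j \<in> {1..n}" for i j
    using b_pos_sym[OF that] by (cases "i = j") (auto simp: algebra_simps)
  have "(\<Sum>i=1..n. \<Sum>j=1..n. b i j * rhat i e * rhat j e * (w i e - w j e) * (p i - p j))
      = 2 * (\<Sum>i=1..n. p i * (\<Sum>j=1..n. b i j * rhat i e * rhat j e * (w i e - w j e)))"
    by (rule sum_antisym_mult_diff) (rule antisym)
  also have "(\<lambda>i. \<Sum>j=1..n. b i j * rhat i e * rhat j e * (w i e - w j e)) = (\<lambda>i. rhat i e * friction w i e)"
    unfolding friction_def by (simp add: sum_distrib_left algebra_simps)
  finally show ?thesis .
qed

lemma sum_rhat_friction: "(\<Sum>i=1..n. rhat i e * friction w i e) = 0"
  using friction_polar[where p="\<lambda>_. 1"] by simp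

lemma dissipation_directional:
  "(\<Sum>e\<in>edges d N. \<Sum>i=1..n. \<Sum>j=1..n. b i j * rhat i e * rhat j e * (w i e - w j e) * (\<psi> i e - \<psi> j e))
    = 2 * (\<Sum>e\<in>edges d N. \<Sum>i=1..n. rhat i e * \<psi> i e * friction w i e)"
proof -
  have "(\<Sum>e\<in>edges d N. \<Sum>i=1..n. \<Sum>j=1..n. b i j * rhat i e * rhat j e * (w i e - w j e) * (\<psi> i e - \<psi> j e))
      = (\<Sum>e\<in>edges d N. 2 * (\<Sum>i=1..n. \<psi> i e * (rhat i e * friction w i e)))"
    by (intro sum.cong refl) (rule friction_polar)
  then show ?thesis by (simp add: sum_distrib_left mult_ac)
qed

lemma dissipation_weight_nonneg:
  "i \<in> {1..n} \<Longrightarrow> j \<in> {1..n} \<Longrightarrow> e \<in> edges d N \<Longrightarrow> i \<noteq> j \<Longrightarrow> 0 \<le> b i j * rhat i e * rhat j e"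
  using b_pos_sym rhat_pos by (simp add: less_imp_le)

lemma dissipation_nonneg: "dissipation w \<ge> 0"
  unfolding dissipation_def
proof (intro sum_nonneg)
  fix e i j assume "e \<in> edges d N" "i \<in> {1..n}" "j \<in> {1..n}"
  then show "0 \<le> b i j * rhat i e * rhat j e * (w i e - w j e)\<^sup>2"
    using dissipation_weight_nonneg by (cases "i = j") simp_all
qed

lemma dissipation_cmult: "dissipation (\<lambda>i e. c * w i e) = c\<^sup>2 * dissipation w"
  unfolding dissipation_def sum_distrib_left
  by (intro sum.cong refl) (simp add: power2_eq_square algebra_simps)

lemma dissipation_ge_linear:
  "dissipation w + 4 * (\<Sum>e\<in>edges d N. \<Sum>i=1..n. rhat i e * (w' i e - w i e) * friction w i e)
     \<le> dissipation w'"
proof -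
  define \<psi> where "\<psi> i e = w' i e - w i e" for i e
  have "dissipation w + 2 * (\<Sum>e\<in>edges d N. \<Sum>i=1..n. \<Sum>j=1..n.
      b i j * rhat i e * rhat j e * (w i e - w j e) * (\<psi> i e - \<psi> j e)) \<le> dissipation w'"
    unfolding dissipation_def sum_distrib_left sum.distrib[symmetric]
  proof (intro sum_mono)
    fix e i j assume "e \<in> edges d N" "i \<in> {1..n}" "j \<in> {1..n}"
    then have "0 \<le> b i j * rhat i e * rhat j e * (\<psi> i e - \<psi> j e)\<^sup>2"
      using dissipation_weight_nonneg by (cases "i = j") simp_all
    moreover have "b i j * rhat i e * rhat j e * (w' i e - w' j e)\<^sup>2
        - (b i j * rhat i e * rhat j e * (w i e - w j e)\<^sup>2
           + 2 * (b i j * rhat i e * rhat j e * (w i e - w j e) * (\<psi> i e - \<psi> j e)))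
        = b i j * rhat i e * rhat j e * (\<psi> i e - \<psi> j e)\<^sup>2"
      unfolding \<psi>_def by (simp add: power2_eq_square algebra_simps)
    ultimately show "b i j * rhat i e * rhat j e * (w i e - w j e)\<^sup>2
        + 2 * (b i j * rhat i e * rhat j e * (w i e - w j e) * (\<psi> i e - \<psi> j e))
        \<le> b i j * rhat i e * rhat j e * (w' i e - w' j e)\<^sup>2"
      by linarith
  qed
  then show ?thesis unfolding dissipation_directional \<psi>_def by simp
qed

lemma dissipation_has_derivative:
  "((\<lambda>t. dissipation (\<lambda>i e. w i e + t * \<psi> i e)) has_real_derivative
     4 * (\<Sum>e\<in>edges d N. \<Sum>i=1..n. rhat i e * \<psi> i e * friction w i e)) (at 0)"
proof -
  have deriv: "((\<lambda>t. dissipation (\<lambda>i e. w i e + t * \<psi> i e)) has_real_derivative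
      (\<Sum>e\<in>edges d N. \<Sum>i=1..n. \<Sum>j=1..n. b i j * rhat i e * rhat j e * (2 * ((w i e - w j e) * (\<psi> i e - \<psi> j e))))) (at 0)"
    unfolding dissipation_def
    by (intro DERIV_sum) (auto intro!: derivative_eq_intros simp: algebra_simps)
  have "(\<Sum>e\<in>edges d N. \<Sum>i=1..n. \<Sum>j=1..n. b i j * rhat i e * rhat j e * (2 * ((w i e - w j e) * (\<psi> i e - \<psi> j e))))
      = 2 * (\<Sum>e\<in>edges d N. \<Sum>i=1..n. \<Sum>j=1..n. b i j * rhat i e * rhat j e * (w i e - w j e) * (\<psi> i e - \<psi> j e))"
    by (simp add: sum_distrib_left mult_ac)
  also have "\<dots> = 4 * (\<Sum>e\<in>edges d N. \<Sum>i=1..n. rhat i e * \<psi> i e * friction w i e)"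
    unfolding dissipation_directional by simp
  finally show ?thesis by (rule DERIV_cong[OF deriv])
qed

lemma entropy_ge_linear:
  assumes "\<forall>i\<in>{1..n}. \<forall>l\<in>cells d N. 0 < \<rho> i l" "\<forall>i\<in>{1..n}. \<forall>l\<in>cells d N. 0 \<le> \<rho>' i l"
  shows "entropy \<rho> + (\<Sum>l\<in>cells d N. \<Sum>i=1..n. (\<rho>' i l - \<rho> i l) * (ln (\<rho> i l) + 1)) \<le> entropy \<rho>'"
  unfolding entropy_def sum.distrib[symmetric]
  using assms by (intro sum_mono) (metis xlnx_ge_tangent mult.commute)

lemma entropy_has_derivative:
  assumes "\<forall>i\<in>{1..n}. \<forall>l\<in>cells d N. 0 < \<rho> i l"
  shows "((\<lambda>t. entropy (\<lambda>i l. \<rho> i l + t * \<sigma> i l)) has_real_derivative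
     (\<Sum>l\<in>cells d N. \<Sum>i=1..n. \<sigma> i l * (ln (\<rho> i l) + 1))) (at 0)"
  unfolding entropy_def
proof (intro DERIV_sum)
  fix l i assume "l \<in> cells d N" "i \<in> {1..n}"
  then have "0 < \<rho> i l" using assms by auto
  then show "((\<lambda>t. (\<rho> i l + t * \<sigma> i l) * ln (\<rho> i l + t * \<sigma> i l)) has_real_derivative
      \<sigma> i l * (ln (\<rho> i l) + 1)) (at 0)"
    by (auto intro!: derivative_eq_intros simp: algebra_simps)
qed

lemma in_KsetD:
  assumes "(\<rho>, w) \<in> Kset d N n h \<delta> rho0"
  shows "\<And>i l. i \<in> {1..n} \<Longrightarrow> l \<in> cells d N \<Longrightarrow> \<delta> \<le> \<rho> i l"
    and "\<And>i l. i \<in> {1..n} \<Longrightarrow> l \<in> cells d N \<Longrightarrow> \<rho> i l - rho0 i l + dh d N h (\<lambda>e. rhat i e * w i e) l = 0"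
    and "\<And>l. l \<in> cells d N \<Longrightarrow> (\<Sum>i=1..n. \<rho> i l) = 1"
    and "\<And>e. e \<in> edges d N \<Longrightarrow> (\<Sum>i=1..n. rhat i e * w i e) = 0"
  using assms unfolding Kset_def by auto

lemma in_KsetI:
  assumes "\<And>i l. i \<in> {1..n} \<Longrightarrow> l \<in> cells d N \<Longrightarrow> \<delta> \<le> \<rho> i l"
    and "\<And>i l. i \<in> {1..n} \<Longrightarrow> l \<in> cells d N \<Longrightarrow> \<rho> i l - rho0 i l + dh d N h (\<lambda>e. rhat i e * w i e) l = 0"
    and "\<And>l. l \<in> cells d N \<Longrightarrow> (\<Sum>i=1..n. \<rho> i l) = 1"
    and "\<And>e. e \<in> edges d N \<Longrightarrow> (\<Sum>i=1..n. rhat i e * w i e) = 0"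
  shows "(\<rho>, w) \<in> Kset d N n h \<delta> rho0"
  using assms unfolding Kset_def by auto

lemma in_Kset_lower_bound:
  "(\<rho>, w) \<in> Kset d N n h \<delta> rho0 \<Longrightarrow> (\<And>i l. i \<in> {1..n} \<Longrightarrow> l \<in> cells d N \<Longrightarrow> \<delta>' \<le> \<rho> i l)
    \<Longrightarrow> (\<rho>, w) \<in> Kset d N n h \<delta>' rho0"
  unfolding Kset_def by auto

lemma Kset_mono: "\<delta>' \<le> \<delta> \<Longrightarrow> Kset d N n h \<delta> rho0 \<subseteq> Kset d N n h \<delta>' rho0"
  unfolding Kset_def by force

lemma Kset_le_one:
  assumes "(\<rho>, w) \<in> Kset d N n h \<delta> rho0" "0 \<le> \<delta>" "i \<in> {1..n}" "l \<in> cells d N"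
  shows "\<rho> i l \<le> 1"
proof -
  have "\<forall>j\<in>{1..n}. 0 \<le> \<rho> j l"
    using in_KsetD(1)[OF assms(1)] assms(2,4) by (meson order_trans)
  then show ?thesis
    using member_le_sum[of i "{1..n}" "\<lambda>i. \<rho> i l"] in_KsetD(3)[OF assms(1) assms(4)] assms(3) by simp
qed

definition minimizer :: "real \<Rightarrow> (nat \<Rightarrow> cell \<Rightarrow> real) \<Rightarrow> (nat \<Rightarrow> edge \<Rightarrow> real) \<Rightarrow> bool" where
  "minimizer \<delta> \<rho> w \<longleftrightarrow> (\<rho>, w) \<in> Kset d N n h \<delta> rho0 \<and>
     (\<forall>(\<rho>', w') \<in> Kset d N n h \<delta> rho0. Jfun d N n h dt b rho0 \<rho> w \<le> Jfun d N n h dt b rho0 \<rho>' w')"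

lemma is_min_rho_component_iff: "is_min_rho_component d N n h dt b \<delta> rho0 \<rho> \<longleftrightarrow> (\<exists>w. minimizer \<delta> \<rho> w)"
  unfolding is_min_rho_component_def minimizer_def by blast

lemma minimizer_raise_bound:
  assumes "minimizer 0 \<rho> w" "0 \<le> \<delta>" "\<And>i l. i \<in> {1..n} \<Longrightarrow> l \<in> cells d N \<Longrightarrow> \<delta> \<le> \<rho> i l"
  shows "minimizer \<delta> \<rho> w"
  using assms Kset_mono[of 0 \<delta>] in_Kset_lower_bound unfolding minimizer_def by blast

definition tangent :: "(nat \<Rightarrow> cell \<Rightarrow> real) \<Rightarrow> (nat \<Rightarrow> edge \<Rightarrow> real) \<Rightarrow> bool" where
  "tangent \<sigma> \<psi> \<longleftrightarrow>
     (\<forall>i\<in>{1..n}. \<forall>l\<in>cells d N. \<sigma> i l + dh d N h (\<lambda>e. rhat i e * \<psi> i e) l = 0) \<and>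
     (\<forall>l\<in>cells d N. (\<Sum>i=1..n. \<sigma> i l) = 0) \<and>
     (\<forall>e\<in>edges d N. (\<Sum>i=1..n. rhat i e * \<psi> i e) = 0)"

lemma Kset_add_tangent:
  assumes K: "(\<rho>, w) \<in> Kset d N n h \<delta> rho0" and T: "tangent \<sigma> \<psi>"
    and lb: "\<And>i l. i \<in> {1..n} \<Longrightarrow> l \<in> cells d N \<Longrightarrow> \<delta>' \<le> \<rho> i l + t * \<sigma> i l"
  shows "(\<lambda>i l. \<rho> i l + t * \<sigma> i l, \<lambda>i e. w i e + t * \<psi> i e) \<in> Kset d N n h \<delta>' rho0"
proof (rule in_KsetI)
  fix i l assume il: "i \<in> {1..n}" "l \<in> cells d N"
  have "(\<lambda>e. rhat i e * (w i e + t * \<psi> i e)) = (\<lambda>e. rhat i e * w i e + t * (rhat i e * \<psi> i e))"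
    by (simp add: algebra_simps)
  then have "dh d N h (\<lambda>e. rhat i e * (w i e + t * \<psi> i e)) l
      = dh d N h (\<lambda>e. rhat i e * w i e) l + t * dh d N h (\<lambda>e. rhat i e * \<psi> i e) l"
    by (simp only: dh_add dh_cmult)
  moreover have "\<sigma> i l + dh d N h (\<lambda>e. rhat i e * \<psi> i e) l = 0"
    using T il unfolding tangent_def by blast
  then have "t * \<sigma> i l + t * dh d N h (\<lambda>e. rhat i e * \<psi> i e) l = 0"
    by (simp add: distrib_left[symmetric])
  ultimately show "\<rho> i l + t * \<sigma> i l - rho0 i l + dh d N h (\<lambda>e. rhat i e * (w i e + t * \<psi> i e)) l = 0"
    using in_KsetD(2)[OF K il] by linarith
next
  fix l assume "l \<in> cells d N"
  then show "(\<Sum>i=1..n. \<rho> i l + t * \<sigma> i l) = 1"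
    using in_KsetD(3)[OF K] T unfolding tangent_def by (simp add: sum.distrib sum_distrib_left[symmetric])
next
  fix e assume "e \<in> edges d N"
  then show "(\<Sum>i=1..n. rhat i e * (w i e + t * \<psi> i e)) = 0"
    using in_KsetD(4)[OF K] T unfolding tangent_def
    by (simp add: distrib_left sum.distrib mult.left_commute[of _ t] sum_distrib_left[symmetric])
qed (rule lb)

lemma Kset_diff_tangent:
  assumes K: "(\<rho>, w) \<in> Kset d N n h \<delta> rho0" and K': "(\<rho>', w') \<in> Kset d N n h \<delta>' rho0"
  shows "tangent (\<lambda>i l. \<rho>' i l - \<rho> i l) (\<lambda>i e. w' i e - w i e)"
  unfolding tangent_def
proof (intro conjI ballI)
  fix i l assume il: "i \<in> {1..n}" "l \<in> cells d N"
  show "\<rho>' i l - \<rho> i l + dh d N h (\<lambda>e. rhat i e * (w' i e - w i e)) l = 0"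
    using in_KsetD(2)[OF K il] in_KsetD(2)[OF K' il] by (simp add: right_diff_distrib dh_diff)
next
  fix l assume "l \<in> cells d N"
  then show "(\<Sum>i=1..n. \<rho>' i l - \<rho> i l) = 0"
    using in_KsetD(3)[OF K] in_KsetD(3)[OF K'] by (simp add: sum_subtractf)
next
  fix e assume "e \<in> edges d N"
  then show "(\<Sum>i=1..n. rhat i e * (w' i e - w i e)) = 0"
    using in_KsetD(4)[OF K] in_KsetD(4)[OF K'] by (simp add: right_diff_distrib sum_subtractf)
qed

lemma tangent_of_flux:
  assumes "\<And>e. (\<Sum>i=1..n. rhat i e * \<psi> i e) = 0"
  shows "tangent (\<lambda>i l. - dh d N h (\<lambda>e. rhat i e * \<psi> i e) l) \<psi>"
  unfolding tangent_def
  using assms by (simp add: sum_negf dh_sum[symmetric] dh_zero)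

lemma rho0_in_Kset:
  "(\<And>i l. i \<in> {1..n} \<Longrightarrow> l \<in> cells d N \<Longrightarrow> \<delta> \<le> rho0 i l) \<Longrightarrow> (rho0, \<lambda>i e. 0) \<in> Kset d N n h \<delta> rho0"
  using rho0_sum by (intro in_KsetI) (simp_all add: dh_zero)

lemma Kset_convex:
  assumes "(\<rho>, w) \<in> Kset d N n h \<delta> rho0" "(\<rho>', w') \<in> Kset d N n h \<delta> rho0" "0 \<le> t" "t \<le> 1"
  shows "(\<lambda>i l. \<rho> i l + t * (\<rho>' i l - \<rho> i l), \<lambda>i e. w i e + t * (w' i e - w i e)) \<in> Kset d N n h \<delta> rho0"
proof (rule Kset_add_tangent[OF assms(1) Kset_diff_tangent[OF assms(1,2)]])
  fix i l assume il: "i \<in> {1..n}" "l \<in> cells d N"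
  have "(1 - t) * \<delta> \<le> (1 - t) * \<rho> i l" "t * \<delta> \<le> t * \<rho>' i l"
    using in_KsetD(1)[OF assms(1) il] in_KsetD(1)[OF assms(2) il] assms(3,4) by (simp_all add: mult_left_mono)
  then have "\<delta> \<le> (1 - t) * \<rho> i l + t * \<rho>' i l" by (simp add: algebra_simps)
  then show "\<delta> \<le> \<rho> i l + t * (\<rho>' i l - \<rho> i l)" by (simp add: algebra_simps)
qed

section \<open>First-order conditions\<close>

definition first_variation ::
  "(nat \<Rightarrow> cell \<Rightarrow> real) \<Rightarrow> (nat \<Rightarrow> edge \<Rightarrow> real) \<Rightarrow> (nat \<Rightarrow> edge \<Rightarrow> real) \<Rightarrow> real" where
  "first_variation \<rho> w \<psi> =
     (\<Sum>e\<in>edges d N. \<Sum>i=1..n. rhat i e * \<psi> i e * (friction w i e / dt + dlog \<rho> i e))"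

lemma entropy_variation:
  assumes "tangent \<sigma> \<psi>"
  shows "(\<Sum>l\<in>cells d N. \<Sum>i=1..n. \<sigma> i l * (ln (\<rho> i l) + 1))
       = (\<Sum>e\<in>edges d N. \<Sum>i=1..n. rhat i e * \<psi> i e * dlog \<rho> i e)"
proof -
  have "(\<Sum>l\<in>cells d N. \<Sum>i=1..n. \<sigma> i l * (ln (\<rho> i l) + 1))
      = (\<Sum>l\<in>cells d N. \<Sum>i=1..n. ln (\<rho> i l) * \<sigma> i l) + (\<Sum>l\<in>cells d N. \<Sum>i=1..n. \<sigma> i l)"
    by (simp add: sum.distrib[symmetric] algebra_simps)
  also have "(\<Sum>l\<in>cells d N. \<Sum>i=1..n. \<sigma> i l) = 0"
    using assms unfolding tangent_def by simp
  also have "(\<Sum>l\<in>cells d N. \<Sum>i=1..n. ln (\<rho> i l) * \<sigma> i l)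
      = (\<Sum>i=1..n. - (\<Sum>l\<in>cells d N. ln (\<rho> i l) * dh d N h (\<lambda>e. rhat i e * \<psi> i e) l))"
  proof (subst sum.swap, intro sum.cong refl)
    fix i assume "i \<in> {1..n}"
    with assms have "\<sigma> i l = - dh d N h (\<lambda>e. rhat i e * \<psi> i e) l" if "l \<in> cells d N" for l
      using that unfolding tangent_def by (simp add: eq_neg_iff_add_eq_0)
    then show "(\<Sum>l\<in>cells d N. ln (\<rho> i l) * \<sigma> i l)
        = - (\<Sum>l\<in>cells d N. ln (\<rho> i l) * dh d N h (\<lambda>e. rhat i e * \<psi> i e) l)"
      unfolding sum_negf[symmetric] by (intro sum.cong refl) simp
  qed
  also have "\<dots> = (\<Sum>e\<in>edges d N. \<Sum>i=1..n. rhat i e * \<psi> i e * dlog \<rho> i e)"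
    unfolding sum_cells_mult_dh dlog_def by (subst sum.swap) simp
  finally show ?thesis by simp
qed

lemma first_variation_split:
  "first_variation \<rho> w \<psi>
     = (\<Sum>e\<in>edges d N. \<Sum>i=1..n. rhat i e * \<psi> i e * friction w i e) / dt
       + (\<Sum>e\<in>edges d N. \<Sum>i=1..n. rhat i e * \<psi> i e * dlog \<rho> i e)"
  unfolding first_variation_def
  by (simp add: distrib_left sum.distrib sum_divide_distrib)

lemma Jfun_ge_first_variation:
  assumes K: "(\<rho>, w) \<in> Kset d N n h 0 rho0" and K': "(\<rho>', w') \<in> Kset d N n h 0 rho0"
    and pos: "\<forall>i\<in>{1..n}. \<forall>l\<in>cells d N. 0 < \<rho> i l"
  shows "Jfun d N n h dt b rho0 \<rho> w + h ^ d * first_variation \<rho> w (\<lambda>i e. w' i e - w i e)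
     \<le> Jfun d N n h dt b rho0 \<rho>' w'"
proof -
  let ?A = "\<Sum>e\<in>edges d N. \<Sum>i=1..n. rhat i e * (w' i e - w i e) * friction w i e"
  let ?B = "\<Sum>l\<in>cells d N. \<Sum>i=1..n. (\<rho>' i l - \<rho> i l) * (ln (\<rho> i l) + 1)"
  have B: "?B = (\<Sum>e\<in>edges d N. \<Sum>i=1..n. rhat i e * (w' i e - w i e) * dlog \<rho> i e)"
    by (rule entropy_variation[OF Kset_diff_tangent[OF K K']])
  have "dissipation w + 4 * ?A \<le> dissipation w'" by (rule dissipation_ge_linear)
  moreover have "entropy \<rho> + ?B \<le> entropy \<rho>'"
    using pos in_KsetD(1)[OF K'] by (intro entropy_ge_linear) auto
  ultimately have "1 / (4 * dt) * h ^ d * (dissipation w + 4 * ?A) + h ^ d * (entropy \<rho> + ?B)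
      \<le> Jfun d N n h dt b rho0 \<rho>' w'"
    unfolding Jfun_eq using dt_pos h_pos by (intro add_mono mult_left_mono) auto
  moreover have "1 / (4 * dt) * h ^ d * (D + 4 * A) + h ^ d * (E + B')
      = (1 / (4 * dt) * h ^ d * D + h ^ d * E) + h ^ d * (A / dt + B')" for D A E B'
    using dt_pos by (simp add: field_simps)
  ultimately show ?thesis
    unfolding Jfun_eq first_variation_split B by simp
qed

lemma Jfun_has_derivative:
  assumes pos: "\<forall>i\<in>{1..n}. \<forall>l\<in>cells d N. 0 < \<rho> i l" and T: "tangent \<sigma> \<psi>"
  shows "((\<lambda>t. Jfun d N n h dt b rho0 (\<lambda>i l. \<rho> i l + t * \<sigma> i l) (\<lambda>i e. w i e + t * \<psi> i e))
     has_real_derivative h ^ d * first_variation \<rho> w \<psi>) (at 0)"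
proof -
  have "((\<lambda>t. 1 / (4 * dt) * h ^ d * dissipation (\<lambda>i e. w i e + t * \<psi> i e)
             + h ^ d * entropy (\<lambda>i l. \<rho> i l + t * \<sigma> i l)) has_real_derivative
      1 / (4 * dt) * h ^ d * (4 * (\<Sum>e\<in>edges d N. \<Sum>i=1..n. rhat i e * \<psi> i e * friction w i e))
      + h ^ d * (\<Sum>l\<in>cells d N. \<Sum>i=1..n. \<sigma> i l * (ln (\<rho> i l) + 1))) (at 0)"
    by (intro DERIV_add DERIV_cmult dissipation_has_derivative entropy_has_derivative pos)
  then show ?thesis
    unfolding Jfun_eq entropy_variation[OF T] first_variation_split
    by (rule DERIV_cong) (use dt_pos in \<open>simp add: field_simps\<close>)
qed

definition balanced :: "(nat \<Rightarrow> cell \<Rightarrow> real) \<Rightarrow> (nat \<Rightarrow> edge \<Rightarrow> real) \<Rightarrow> bool" where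
  "balanced \<rho> w \<longleftrightarrow> (\<forall>e\<in>edges d N. \<forall>i\<in>{1..n}. \<forall>k\<in>{1..n}.
     friction w i e / dt + dlog \<rho> i e = friction w k e / dt + dlog \<rho> k e)"

lemma balancedD:
  "balanced \<rho> w \<Longrightarrow> e \<in> edges d N \<Longrightarrow> i \<in> {1..n} \<Longrightarrow> k \<in> {1..n}
    \<Longrightarrow> friction w i e / dt + dlog \<rho> i e = friction w k e / dt + dlog \<rho> k e"
  unfolding balanced_def by blast

lemma first_variation_balanced:
  assumes "balanced \<rho> w" and flux: "\<And>e. e \<in> edges d N \<Longrightarrow> (\<Sum>i=1..n. rhat i e * \<psi> i e) = 0"
  shows "first_variation \<rho> w \<psi> = 0"
proof -
  have "(\<Sum>i=1..n. rhat i e * \<psi> i e * (friction w i e / dt + dlog \<rho> i e)) = 0"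
    if e: "e \<in> edges d N" for e
  proof -
    have "(\<Sum>i=1..n. rhat i e * \<psi> i e * (friction w i e / dt + dlog \<rho> i e))
        = (\<Sum>i=1..n. rhat i e * \<psi> i e * (friction w 1 e / dt + dlog \<rho> 1 e))"
    proof (intro sum.cong refl)
      fix i assume "i \<in> {1..n}"
      moreover have "1 \<in> {1..n}" using n_pos by simp
      ultimately show "rhat i e * \<psi> i e * (friction w i e / dt + dlog \<rho> i e)
          = rhat i e * \<psi> i e * (friction w 1 e / dt + dlog \<rho> 1 e)"
        using balancedD[OF assms(1) e] by metis
    qed
    also have "\<dots> = 0"
      using flux[OF e] by (simp add: sum_distrib_right[symmetric])
    finally show ?thesis .
  qed
  then show ?thesis unfolding first_variation_def by simp
qed

lemma balanced_imp_minimizer: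
  assumes K: "(\<rho>1, w) \<in> Kset d N n h 0 rho0" and pos: "\<forall>i\<in>{1..n}. \<forall>l\<in>cells d N. 0 < \<rho>1 i l"
    and "balanced \<rho>1 w"
  shows "minimizer 0 \<rho>1 w"
  unfolding minimizer_def
proof (intro conjI K ballI, clarify)
  fix \<rho> w' assume K': "(\<rho>, w') \<in> Kset d N n h 0 rho0"
  have "first_variation \<rho>1 w (\<lambda>i e. w' i e - w i e) = 0"
    using Kset_diff_tangent[OF K K'] \<open>balanced \<rho>1 w\<close> unfolding tangent_def
    by (intro first_variation_balanced) auto
  then show "Jfun d N n h dt b rho0 \<rho>1 w \<le> Jfun d N n h dt b rho0 \<rho> w'"
    using Jfun_ge_first_variation[OF K K' pos] by simp
qed

lemma first_variation_zero_at_minimizer: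
  assumes min: "minimizer \<delta> \<rho>1 w" and gt: "\<forall>i\<in>{1..n}. \<forall>l\<in>cells d N. \<delta> < \<rho>1 i l"
    and "0 \<le> \<delta>" and T: "tangent \<sigma> \<psi>"
  shows "first_variation \<rho>1 w \<psi> = 0"
proof -
  have K: "(\<rho>1, w) \<in> Kset d N n h \<delta> rho0" using min unfolding minimizer_def by blast
  define f where "f t = Jfun d N n h dt b rho0 (\<lambda>i l. \<rho>1 i l + t * \<sigma> i l) (\<lambda>i e. w i e + t * \<psi> i e)" for t
  have "\<forall>\<^sub>F t in nhds 0. \<forall>i\<in>{1..n}. \<forall>l\<in>cells d N. \<delta> < \<rho>1 i l + t * \<sigma> i l"
    using gt by (intro eventually_ball_finite finite_cells finite_atLeastAtMost ballI
        order_tendstoD(1)[OF tendsto_affine_nhds]) auto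
  then obtain r where "r > 0" and r: "\<And>t. dist t 0 < r \<Longrightarrow> \<forall>i\<in>{1..n}. \<forall>l\<in>cells d N. \<delta> < \<rho>1 i l + t * \<sigma> i l"
    unfolding eventually_nhds_metric by blast
  have "f 0 \<le> f t" if "\<bar>0 - t\<bar> < r" for t
  proof -
    have "(\<lambda>i l. \<rho>1 i l + t * \<sigma> i l, \<lambda>i e. w i e + t * \<psi> i e) \<in> Kset d N n h \<delta> rho0"
      using r[of t] that by (intro Kset_add_tangent[OF K T]) (auto simp: dist_real_def less_imp_le)
    then show ?thesis using min unfolding f_def minimizer_def by auto
  qed
  moreover have "(f has_real_derivative h ^ d * first_variation \<rho>1 w \<psi>) (at 0)"
    unfolding f_def using gt \<open>0 \<le> \<delta>\<close> by (intro Jfun_has_derivative T) force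
  ultimately have "h ^ d * first_variation \<rho>1 w \<psi> = 0"
    using \<open>r > 0\<close> by (intro DERIV_local_min[of f]) auto
  then show ?thesis using h_pos by simp
qed

lemma sum_eq_one_of_transport:
  assumes "\<And>i. i \<in> {1..n} \<Longrightarrow> \<rho> i l - rho0 i l + dh d N h (\<lambda>e. rhat i e * w i e) l = 0"
    and "\<And>e. e \<in> edges d N \<Longrightarrow> (\<Sum>i=1..n. rhat i e * w i e) = 0" and l: "l \<in> cells d N"
  shows "(\<Sum>i=1..n. \<rho> i l) = 1"
proof -
  have "(\<Sum>i=1..n. \<rho> i l) = (\<Sum>i=1..n. rho0 i l - dh d N h (\<lambda>e. rhat i e * w i e) l)"
  proof (intro sum.cong refl)
    fix i assume "i \<in> {1..n}"
    from assms(1)[OF this] show "\<rho> i l = rho0 i l - dh d N h (\<lambda>e. rhat i e * w i e) l" by linarith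
  qed
  also have "\<dots> = (\<Sum>i=1..n. rho0 i l) - dh d N h (\<lambda>e. \<Sum>i=1..n. rhat i e * w i e) l"
    by (simp add: dh_sum sum_subtractf)
  also have "dh d N h (\<lambda>e. \<Sum>i=1..n. rhat i e * w i e) l = dh d N h (\<lambda>e. 0) l"
    using assms(2) l by (rule dh_cong)
  finally show ?thesis using rho0_sum[OF l] by (simp add: dh_zero)
qed

lemma in_Kset_velocity_iff:
  "(\<rho>, \<lambda>i e. dt * v i e) \<in> Kset d N n h \<delta> rho0 \<longleftrightarrow>
     (\<forall>i\<in>{1..n}. \<forall>l\<in>cells d N. \<delta> \<le> \<rho> i l) \<and>
     (\<forall>i\<in>{1..n}. \<forall>l\<in>cells d N. (\<rho> i l - rho0 i l) / dt + dh d N h (\<lambda>e. rhat i e * v i e) l = 0) \<and>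
     (\<forall>e\<in>edges d N. (\<Sum>i=1..n. rhat i e * v i e) = 0)"
proof -
  have transport: "\<rho> i l - rho0 i l + dh d N h (\<lambda>e. rhat i e * (dt * v i e)) l = 0
      \<longleftrightarrow> (\<rho> i l - rho0 i l) / dt + dh d N h (\<lambda>e. rhat i e * v i e) l = 0" for i l
    using dh_cmult[of d N h dt "\<lambda>e. rhat i e * v i e" l] dt_pos
    by (simp add: mult.left_commute field_simps)
  have flux: "(\<Sum>i=1..n. rhat i e * (dt * v i e)) = dt * (\<Sum>i=1..n. rhat i e * v i e)" for e
    by (simp add: sum_distrib_left mult.left_commute)
  have "(\<rho>, \<lambda>i e. dt * v i e) \<in> Kset d N n h \<delta> rho0 \<longleftrightarrow>
     (\<forall>i\<in>{1..n}. \<forall>l\<in>cells d N. \<delta> \<le> \<rho> i l) \<and>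
     (\<forall>i\<in>{1..n}. \<forall>l\<in>cells d N. \<rho> i l - rho0 i l + dh d N h (\<lambda>e. rhat i e * (dt * v i e)) l = 0) \<and>
     (\<forall>l\<in>cells d N. (\<Sum>i=1..n. \<rho> i l) = 1) \<and>
     (\<forall>e\<in>edges d N. (\<Sum>i=1..n. rhat i e * (dt * v i e)) = 0)"
    unfolding Kset_def by auto
  also have "\<dots> \<longleftrightarrow>
     (\<forall>i\<in>{1..n}. \<forall>l\<in>cells d N. \<delta> \<le> \<rho> i l) \<and>
     (\<forall>i\<in>{1..n}. \<forall>l\<in>cells d N. \<rho> i l - rho0 i l + dh d N h (\<lambda>e. rhat i e * (dt * v i e)) l = 0) \<and>
     (\<forall>e\<in>edges d N. (\<Sum>i=1..n. rhat i e * (dt * v i e)) = 0)"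
    using sum_eq_one_of_transport[where \<rho>=\<rho> and w="\<lambda>i e. dt * v i e"] by blast
  finally show ?thesis
    unfolding transport flux using dt_pos by simp
qed

lemma balanced_velocity_iff:
  "balanced \<rho> (\<lambda>i e. dt * v i e) \<longleftrightarrow>
     (\<forall>e\<in>edges d N. \<forall>i\<in>{1..n}. \<forall>k\<in>{1..n}. friction v i e + dlog \<rho> i e = friction v k e + dlog \<rho> k e)"
  unfolding balanced_def friction_cmult using dt_pos by simp

lemma edge_equations_iff:
  "(\<forall>i\<in>{1..n}. \<forall>e\<in>edges d N.
      - (\<Sum>j=1..n. b i j * rhat j e * (v i e - v j e))
      = Dh N h (\<lambda>l. ln (\<rho> i l)) e
        - (\<Sum>j=1..n. rhat j e * Dh N h (\<lambda>l. ln (\<rho> j l)) e) / (\<Sum>j=1..n. rhat j e))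
   \<longleftrightarrow> (\<forall>e\<in>edges d N. \<forall>i\<in>{1..n}. \<forall>k\<in>{1..n}. friction v i e + dlog \<rho> i e = friction v k e + dlog \<rho> k e)"
proof -
  have "(\<forall>i\<in>{1..n}. - friction v i e = dlog \<rho> i e - (\<Sum>j=1..n. rhat j e * dlog \<rho> j e) / (\<Sum>j=1..n. rhat j e))
      \<longleftrightarrow> (\<forall>i\<in>{1..n}. \<forall>k\<in>{1..n}. friction v i e + dlog \<rho> i e = friction v k e + dlog \<rho> k e)"
    if "e \<in> edges d N" for e
    using sum_rhat_pos[OF that] sum_rhat_friction
    by (intro common_value_iff_weighted_mean) auto
  then show ?thesis unfolding friction_def dlog_def by blast
qed

lemma scheme_solution_iff_balanced:
  assumes "\<forall>i\<in>{1..n}. \<forall>l\<in>cells d N. \<delta> \<le> \<rho>1 i l"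
  shows "is_scheme_solution d N n h dt b rho0 \<rho>1 \<longleftrightarrow>
     (\<exists>w. (\<rho>1, w) \<in> Kset d N n h \<delta> rho0 \<and> balanced \<rho>1 w)"
proof -
  have "is_scheme_solution d N n h dt b rho0 \<rho>1 \<longleftrightarrow>
     (\<exists>v. (\<rho>1, \<lambda>i e. dt * v i e) \<in> Kset d N n h \<delta> rho0 \<and> balanced \<rho>1 (\<lambda>i e. dt * v i e))"
    unfolding is_scheme_solution_def in_Kset_velocity_iff balanced_velocity_iff edge_equations_iff[symmetric]
    using assms by auto
  also have "\<dots> \<longleftrightarrow> (\<exists>w. (\<rho>1, w) \<in> Kset d N n h \<delta> rho0 \<and> balanced \<rho>1 w)"
  proof
    assume "\<exists>w. (\<rho>1, w) \<in> Kset d N n h \<delta> rho0 \<and> balanced \<rho>1 w"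
    moreover have "(\<lambda>i e. dt * (w i e / dt)) = w" for w using dt_pos by simp
    ultimately show "\<exists>v. (\<rho>1, \<lambda>i e. dt * v i e) \<in> Kset d N n h \<delta> rho0 \<and> balanced \<rho>1 (\<lambda>i e. dt * v i e)"
      by metis
  qed blast
  finally show ?thesis .
qed

lemma minimizer_imp_balanced:
  assumes min: "minimizer \<delta> \<rho>1 w" and gt: "\<forall>i\<in>{1..n}. \<forall>l\<in>cells d N. \<delta> < \<rho>1 i l"
    and "0 \<le> \<delta>"
  shows "balanced \<rho>1 w"
  unfolding balanced_def
proof (intro ballI)
  fix e0 i k assume e0: "e0 \<in> edges d N" and i: "i \<in> {1..n}" and k: "k \<in> {1..n}"
  \<comment> \<open>exchange of flux between species i and k across the single edge e0\<close>
  define \<psi> where "\<psi> j e = (if e = e0 then (if j = i then 1 / rhat i e0 else 0) - (if j = k then 1 / rhat k e0 else 0) else 0)"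
    for j e
  have "rhat i e0 \<noteq> 0" "rhat k e0 \<noteq> 0" using rhat_pos e0 i k by (auto simp: less_imp_neq[symmetric])
  then have weighted_term: "rhat j e * \<psi> j e * F j
      = (if e = e0 then (if j = i then F i else 0) - (if j = k then F k else 0) else 0)" for j e F
    unfolding \<psi>_def by (cases "e = e0"; cases "j = i"; cases "j = k") simp_all
  have pair: "(\<Sum>j=1..n. rhat j e * \<psi> j e * F j) = (if e = e0 then F i - F k else 0)" for e F
    unfolding weighted_term using i k by (cases "e = e0") (simp_all add: sum_subtractf)
  have "tangent (\<lambda>j l. - dh d N h (\<lambda>e. rhat j e * \<psi> j e) l) \<psi>"
    using pair[where F="\<lambda>_. 1"] by (intro tangent_of_flux) simp
  then have "first_variation \<rho>1 w \<psi> = 0"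
    by (rule first_variation_zero_at_minimizer[OF min gt \<open>0 \<le> \<delta>\<close>])
  moreover have "first_variation \<rho>1 w \<psi>
      = (friction w i e0 / dt + dlog \<rho>1 i e0) - (friction w k e0 / dt + dlog \<rho>1 k e0)"
    unfolding first_variation_def pair using e0 finite_edges by simp
  ultimately show "friction w i e0 / dt + dlog \<rho>1 i e0 = friction w k e0 / dt + dlog \<rho>1 k e0"
    by simp
qed

section \<open>Minimizers stay away from zero\<close>

lemma rho0_lower_bound:
  obtains m0 where "0 < m0" "m0 \<le> 1" "\<And>i l. i \<in> {1..n} \<Longrightarrow> l \<in> cells d N \<Longrightarrow> m0 \<le> rho0 i l"
proof -
  let ?S = "(\<lambda>(i, l). rho0 i l) ` ({1..n} \<times> cells d N)"
  have one: "(1, \<lambda>_. 0) \<in> {1..n} \<times> cells d N" using n_pos N_pos zero_in_cells by simp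
  have fin: "finite ?S" using finite_cells by simp
  have "Min ?S \<in> ?S" using fin one by (intro Min_in) auto
  then have "0 < Min ?S" using rho0_pos by auto
  moreover have le: "Min ?S \<le> rho0 i l" if "i \<in> {1..n}" "l \<in> cells d N" for i l
    using fin that by (intro Min_le) (auto simp: image_iff intro!: bexI[of _ "(i, l)"])
  moreover have "Min ?S \<le> 1"
    using le[of 1 "\<lambda>_. 0"] rho0_le_one[of 1 "\<lambda>_. 0"] one by force
  ultimately show ?thesis using that by blast
qed

lemma entropy_decreases_toward_rho0:
  fixes m0 t :: real
  assumes m0: "0 < m0" "\<And>i l. i \<in> {1..n} \<Longrightarrow> l \<in> cells d N \<Longrightarrow> m0 \<le> rho0 i l"
    and t: "0 < t" "t \<le> m0 / 2"
      "(ln (2 * t) + 1) * (m0 / 2) \<le> - (real n * real (card (cells d N))) * (1 - ln m0)"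
    and K: "(\<rho>, w) \<in> Kset d N n h 0 rho0" and pos: "\<forall>i\<in>{1..n}. \<forall>l\<in>cells d N. 0 < \<rho> i l"
    and small: "i0 \<in> {1..n}" "l0 \<in> cells d N" "\<rho> i0 l0 \<le> t"
  shows "entropy (\<lambda>i l. \<rho> i l + t * (rho0 i l - \<rho> i l)) < entropy \<rho>"
proof -
  define C where "C = real n * real (card (cells d N))"
  define M where "M = 1 - ln m0"
  define A where "A = (ln (2 * t) + 1) * (m0 / 2)"
  let ?\<rho>t = "\<lambda>i l. \<rho> i l + t * (rho0 i l - \<rho> i l)"
  have "m0 \<le> 1" using m0 rho0_le_one n_pos N_pos zero_in_cells by force
  then have "t \<le> 1" "1 \<le> M" using t m0 by (simp_all add: M_def)
  then have "0 \<le> C * M" by (simp add: C_def)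
  have A_le: "A \<le> - C * M" using t(3) unfolding A_def C_def M_def .
  have "ln (2 * t) + 1 \<le> 0"
  proof (rule ccontr)
    assume "\<not> ln (2 * t) + 1 \<le> 0"
    then have "0 < A" unfolding A_def using m0 by simp
    with A_le \<open>0 \<le> C * M\<close> show False by linarith
  qed
  have pointwise: "?\<rho>t i l * ln (?\<rho>t i l)
      \<le> \<rho> i l * ln (\<rho> i l) + t * M + (if l = l0 \<and> i = i0 then t * (A - M) else 0)"
    if i: "i \<in> {1..n}" and l: "l \<in> cells d N" for i l
  proof -
    have "0 < \<rho> i l" "\<rho> i l \<le> 1" "m0 \<le> rho0 i l" "rho0 i l \<le> 1"
      using pos Kset_le_one[OF K] m0 rho0_le_one i l by auto
    then show ?thesis
      using xlnx_step_le[of "\<rho> i l" m0 "rho0 i l" t] xlnx_step_le_small[of "\<rho> i l" t m0 "rho0 i l"]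
        small t m0 \<open>t \<le> 1\<close> \<open>ln (2 * t) + 1 \<le> 0\<close>
      unfolding A_def M_def by (auto simp: algebra_simps)
  qed
  have "entropy ?\<rho>t \<le> (\<Sum>l\<in>cells d N. \<Sum>i=1..n.
      \<rho> i l * ln (\<rho> i l) + t * M + (if l = l0 \<and> i = i0 then t * (A - M) else 0))"
    unfolding entropy_def by (intro sum_mono pointwise) auto
  also have "\<dots> = entropy \<rho> + (\<Sum>l\<in>cells d N. \<Sum>i=1..n. t * M)
      + (\<Sum>l\<in>cells d N. \<Sum>i=1..n. if l = l0 \<and> i = i0 then t * (A - M) else 0)"
    unfolding entropy_def by (simp only: sum.distrib)
  also have "(\<Sum>l\<in>cells d N. \<Sum>i=1..n. t * M) = C * (t * M)"
    unfolding C_def by simp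
  also have "(\<Sum>l\<in>cells d N. \<Sum>i=1..n. if l = l0 \<and> i = i0 then t * (A - M) else 0)
      = (\<Sum>l\<in>cells d N. if l = l0 then t * (A - M) else 0)"
    using small(1) by (intro sum.cong refl) simp
  also have "\<dots> = t * (A - M)"
    using small(2) finite_cells by simp
  also have "entropy \<rho> + C * (t * M) + t * (A - M) = entropy \<rho> + t * (C * M + A - M)"
    by (simp add: algebra_simps)
  also have "\<dots> < entropy \<rho>"
    using A_le \<open>1 \<le> M\<close> t by (simp add: mult_pos_neg)
  finally show ?thesis .
qed

lemma Jfun_decreases_toward_rho0:
  fixes m0 t :: real
  assumes m0: "0 < m0" "\<And>i l. i \<in> {1..n} \<Longrightarrow> l \<in> cells d N \<Longrightarrow> m0 \<le> rho0 i l"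
    and t: "0 < t" "t \<le> m0 / 2"
      "(ln (2 * t) + 1) * (m0 / 2) \<le> - (real n * real (card (cells d N))) * (1 - ln m0)"
    and K: "(\<rho>, w) \<in> Kset d N n h 0 rho0" and pos: "\<forall>i\<in>{1..n}. \<forall>l\<in>cells d N. 0 < \<rho> i l"
    and small: "i0 \<in> {1..n}" "l0 \<in> cells d N" "\<rho> i0 l0 \<le> t"
  shows "Jfun d N n h dt b rho0 (\<lambda>i l. \<rho> i l + t * (rho0 i l - \<rho> i l)) (\<lambda>i e. w i e + t * (0 - w i e))
       < Jfun d N n h dt b rho0 \<rho> w"
proof -
  have "t \<le> 1" using t m0 rho0_le_one[of 1 "\<lambda>_. 0"] n_pos N_pos zero_in_cells by force
  have "(\<lambda>i e. w i e + t * (0 - w i e)) = (\<lambda>i e. (1 - t) * w i e)" by (simp add: algebra_simps)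
  moreover have "(1 - t)\<^sup>2 * dissipation w \<le> 1 * dissipation w"
    using t \<open>t \<le> 1\<close> dissipation_nonneg by (intro mult_right_mono) (auto simp: power_le_one)
  ultimately have "dissipation (\<lambda>i e. w i e + t * (0 - w i e)) \<le> dissipation w"
    by (simp add: dissipation_cmult)
  then show ?thesis
    using entropy_decreases_toward_rho0[OF m0 t K pos small] dt_pos h_pos unfolding Jfun_eq
    by (intro add_le_less_mono mult_left_mono mult_strict_left_mono) auto
qed

lemma minimizer_lower_bound:
  obtains \<delta>0 where "0 < \<delta>0"
    and "\<And>\<delta> \<rho> w i l. 0 \<le> \<delta> \<Longrightarrow> \<delta> \<le> \<delta>0 \<Longrightarrow> minimizer \<delta> \<rho> w
      \<Longrightarrow> \<forall>i\<in>{1..n}. \<forall>l\<in>cells d N. 0 < \<rho> i l \<Longrightarrow> i \<in> {1..n} \<Longrightarrow> l \<in> cells d N \<Longrightarrow> \<delta>0 < \<rho> i l"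
proof -
  obtain m0 where m0: "0 < m0" "m0 \<le> 1" "\<And>i l. i \<in> {1..n} \<Longrightarrow> l \<in> cells d N \<Longrightarrow> m0 \<le> rho0 i l"
    using rho0_lower_bound by blast
  define CM where "CM = real n * real (card (cells d N)) * (1 - ln m0)"
  define \<delta>0 where "\<delta>0 = min (m0 / 2) (exp (- 2 * CM / m0 - 1) / 2)"
  have "0 < \<delta>0" "\<delta>0 \<le> m0 / 2" using m0 by (auto simp: \<delta>0_def)
  have "ln (2 * \<delta>0) \<le> ln (exp (- 2 * CM / m0 - 1))"
    using \<open>0 < \<delta>0\<close> by (subst ln_le_cancel_iff) (auto simp: \<delta>0_def)
  then have "(ln (2 * \<delta>0) + 1) * (m0 / 2) \<le> (- 2 * CM / m0) * (m0 / 2)"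
    using m0 by (intro mult_right_mono) auto
  also have "\<dots> = - (real n * real (card (cells d N))) * (1 - ln m0)"
    using m0 by (simp add: CM_def)
  finally have decrease: "Jfun d N n h dt b rho0 (\<lambda>i l. \<rho> i l + \<delta>0 * (rho0 i l - \<rho> i l))
      (\<lambda>i e. w i e + \<delta>0 * (0 - w i e)) < Jfun d N n h dt b rho0 \<rho> w"
    if "(\<rho>, w) \<in> Kset d N n h 0 rho0" "\<forall>i\<in>{1..n}. \<forall>l\<in>cells d N. 0 < \<rho> i l"
       "i0 \<in> {1..n}" "l0 \<in> cells d N" "\<rho> i0 l0 \<le> \<delta>0" for \<rho> w i0 l0
    using m0 \<open>0 < \<delta>0\<close> \<open>\<delta>0 \<le> m0 / 2\<close> that by (intro Jfun_decreases_toward_rho0) auto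
  show ?thesis
  proof (rule that[OF \<open>0 < \<delta>0\<close>], rule ccontr)
    fix \<delta> \<rho> w i l
    assume \<delta>: "0 \<le> \<delta>" "\<delta> \<le> \<delta>0" and min: "minimizer \<delta> \<rho> w"
      and pos: "\<forall>i\<in>{1..n}. \<forall>l\<in>cells d N. 0 < \<rho> i l"
      and il: "i \<in> {1..n}" "l \<in> cells d N" and "\<not> \<delta>0 < \<rho> i l"
    have K: "(\<rho>, w) \<in> Kset d N n h \<delta> rho0" using min unfolding minimizer_def by blast
    have "(\<rho>, w) \<in> Kset d N n h 0 rho0" using K Kset_mono \<delta>(1) by blast
    moreover have "\<delta> \<le> rho0 i l" if "i \<in> {1..n}" "l \<in> cells d N" for i l
      using m0(1) m0(3)[OF that] \<delta> \<open>\<delta>0 \<le> m0 / 2\<close> by linarith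
    then have "(rho0, \<lambda>i e. 0) \<in> Kset d N n h \<delta> rho0" by (rule rho0_in_Kset)
    then have "(\<lambda>i l. \<rho> i l + \<delta>0 * (rho0 i l - \<rho> i l), \<lambda>i e. w i e + \<delta>0 * (0 - w i e)) \<in> Kset d N n h \<delta> rho0"
      using \<open>0 < \<delta>0\<close> \<open>\<delta>0 \<le> m0 / 2\<close> m0(2) by (intro Kset_convex[OF K]) auto
    ultimately show False
      using decrease[OF _ pos il] min \<open>\<not> \<delta>0 < \<rho> i l\<close> unfolding minimizer_def by fastforce
  qed
qed

end

theorem theoremA1:
  fixes d N n :: nat and L h dt :: real
    and b :: "nat \<Rightarrow> nat \<Rightarrow> real"
    and rho0 :: "nat \<Rightarrow> cell \<Rightarrow> real"
  assumes "d \<ge> 1" and "n \<ge> 2" and "N \<ge> 1" and "L > 0" and "h = L / real N" and "dt > 0"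
    and "\<And>i j. i \<in> {1..n} \<Longrightarrow> j \<in> {1..n} \<Longrightarrow> i \<noteq> j \<Longrightarrow> b i j > 0 \<and> b i j = b j i"
    and "\<And>i l. i \<in> {1..n} \<Longrightarrow> l \<in> cells d N \<Longrightarrow> rho0 i l > 0"
    and "\<And>l. l \<in> cells d N \<Longrightarrow> (\<Sum>i=1..n. rho0 i l) = 1"
  shows "\<exists>\<delta>0>0. \<forall>\<delta>. 0 < \<delta> \<and> \<delta> \<le> \<delta>0 \<longrightarrow>
           (\<forall>rho1 :: nat \<Rightarrow> cell \<Rightarrow> real.
              (\<forall>i\<in>{1..n}. \<forall>l\<in>cells d N. rho1 i l > 0) \<longrightarrow>
              (is_scheme_solution d N n h dt b rho0 rho1 \<longleftrightarrow>
               is_min_rho_component d N n h dt b \<delta> rho0 rho1))"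
proof -
  interpret scheme_step d N n h dt b rho0
    using assms by unfold_locales auto
  obtain \<delta>0 where "0 < \<delta>0" and lower_bound: "\<And>\<delta> \<rho> w i l. 0 \<le> \<delta> \<Longrightarrow> \<delta> \<le> \<delta>0
      \<Longrightarrow> minimizer \<delta> \<rho> w \<Longrightarrow> \<forall>i\<in>{1..n}. \<forall>l\<in>cells d N. 0 < \<rho> i l
      \<Longrightarrow> i \<in> {1..n} \<Longrightarrow> l \<in> cells d N \<Longrightarrow> \<delta>0 < \<rho> i l"
    using minimizer_lower_bound by blast
  show ?thesis
  proof (intro exI[of _ \<delta>0] conjI allI impI \<open>0 < \<delta>0\<close>)
    fix \<delta> :: real and \<rho>1 :: "nat \<Rightarrow> cell \<Rightarrow> real"
    assume "0 < \<delta> \<and> \<delta> \<le> \<delta>0" and pos: "\<forall>i\<in>{1..n}. \<forall>l\<in>cells d N. 0 < \<rho>1 i l"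
    then have \<delta>: "0 \<le> \<delta>" "\<delta> \<le> \<delta>0" by auto
    show "is_scheme_solution d N n h dt b rho0 \<rho>1 \<longleftrightarrow> is_min_rho_component d N n h dt b \<delta> rho0 \<rho>1"
      unfolding is_min_rho_component_iff
    proof
      assume "is_scheme_solution d N n h dt b rho0 \<rho>1"
      then obtain w where K0: "(\<rho>1, w) \<in> Kset d N n h 0 rho0" and "balanced \<rho>1 w"
        using scheme_solution_iff_balanced[of 0] pos by (auto simp: less_imp_le)
      then have min0: "minimizer 0 \<rho>1 w" using balanced_imp_minimizer[OF K0 pos] by blast
      have "\<delta> \<le> \<rho>1 i l" if "i \<in> {1..n}" "l \<in> cells d N" for i l
        using lower_bound[OF order_refl less_imp_le[OF \<open>0 < \<delta>0\<close>] min0 pos that] \<delta> by linarith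
      then show "\<exists>w. minimizer \<delta> \<rho>1 w" using minimizer_raise_bound[OF min0 \<delta>(1)] by blast
    next
      assume "\<exists>w. minimizer \<delta> \<rho>1 w"
      then obtain w where min: "minimizer \<delta> \<rho>1 w" ..
      then have K: "(\<rho>1, w) \<in> Kset d N n h \<delta> rho0" unfolding minimizer_def by blast
      have "\<forall>i\<in>{1..n}. \<forall>l\<in>cells d N. \<delta> < \<rho>1 i l"
        using lower_bound[OF \<delta> min pos] \<delta> by force
      then have "balanced \<rho>1 w" using minimizer_imp_balanced[OF min _ \<delta>(1)] by blast
      moreover have "\<forall>i\<in>{1..n}. \<forall>l\<in>cells d N. \<delta> \<le> \<rho>1 i l" using in_KsetD(1)[OF K] by blast
      ultimately show "is_scheme_solution d N n h dt b rho0 \<rho>1"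
        using scheme_solution_iff_balanced K by blast
    qed
  qed
qed

end
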